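(* Let $\mathbb{K}$ be a Hausdorff non-discrete topological field, let $E$ and $F$ be (Hausdorff) topological $\mathbb{K}$-vector spaces, $N$ a closed vector subspace of $E$, $E_1:=E/N$ and $q\colon E\to E_1$ the quotient map. Let $k\in\mathbb{N}_0\cup\{\infty\}$, let $f_1\colon U_1\to F$ be a map defined on an open subset $U_1\subseteq E_1$, and let $U\subseteq E$ be an open subset with $q(U)=U_1$. Then $f_1$ is of class $C^k$ if and only if $f:=f_1\circ q|_U\colon U\to F$ is of class $C^k$.
   Context: All topological vector spaces are Hausdorff; products carry the product topology. For open $V$ in a topological $\mathbb{K}$-vector space $X$, $V^{[1]}:=\{(x,v,t)\in V\times X\times\mathbb{K}:x+tv\in V\}$. A map $g\colon V\to Y$ into a topological $\mathbb{K}$-vector space is $C^0$ if continuous, and $C^1$ if continuous and there is a continuous $g^{[1]}\colon V^{[1]}\to Y$ with $g(x+tv)-g(x)=t\,g^{[1]}(x,v,t)$ for all $(x,v,t)\in V^{[1]}$; recursively $V^{[k+1]}=(V^{[k]})^{[1]}$, $g$ is $C^{k+1}$ if $C^k$ and $g^{[k]}$ is $C^1$, $g^{[k+1]}=(g^{[k]})^{[1]}$; $C^\infty$ = $C^k$ for all $k\in\mathbb{N}_0$. *)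

theory Defs
  imports "HOL-Analysis.Analysis" "HOL-Library.Extended_Nat"
begin

text \<open>The topological field K is a type of class field + t2_space (Hausdorff);
  field operations continuous (inversion on K without 0).\<close>
definition top_field :: "'k::{field,topological_space} itself \<Rightarrow> bool" where
  "top_field _ \<longleftrightarrow>
     continuous_on UNIV (\<lambda>p::'k\<times>'k. fst p + snd p) \<and>
     continuous_on UNIV (\<lambda>p::'k\<times>'k. fst p * snd p) \<and>
     continuous_on UNIV (\<lambda>x::'k. - x) \<and>
     continuous_on (- {0}) (\<lambda>x::'k. inverse x)"

definition non_discrete :: "'k::topological_space itself \<Rightarrow> bool" where
  "non_discrete _ \<longleftrightarrow> \<not> (\<forall>S::'k set. open S)"

definition tvs :: "('k::{field,topological_space} \<Rightarrow> 'e::{ab_group_add,topological_space} \<Rightarrow> 'e) \<Rightarrow> bool" where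
  "tvs sc \<longleftrightarrow> vector_space sc \<and>
     continuous_on UNIV (\<lambda>p::'e\<times>'e. fst p + snd p) \<and>
     continuous_on UNIV (\<lambda>p::'k\<times>'e. sc (fst p) (snd p))"

definition quot_top :: "'a topology \<Rightarrow> ('a \<Rightarrow> 'b) \<Rightarrow> 'b topology" where
  "quot_top T q = topology (\<lambda>U. U \<subseteq> q ` topspace T \<and> openin T (topspace T \<inter> q -` U))"

definition coset_of :: "'e::ab_group_add set \<Rightarrow> 'e \<Rightarrow> 'e set" where
  "coset_of N x = {x + n | n. n \<in> N}"

definition quot_add :: "'e::ab_group_add set \<Rightarrow> 'e set \<Rightarrow> 'e set \<Rightarrow> 'e set" where
  "quot_add N A B = coset_of N ((SOME a. a \<in> A) + (SOME b. b \<in> B))"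

definition quot_scl :: "('k \<Rightarrow> 'e::ab_group_add \<Rightarrow> 'e) \<Rightarrow> 'e set \<Rightarrow> 'k \<Rightarrow> 'e set \<Rightarrow> 'e set" where
  "quot_scl sc N t A = coset_of N (sc t (SOME a. a \<in> A))"

definition quot_space_top :: "'e::{ab_group_add,topological_space} set \<Rightarrow> 'e set topology" where
  "quot_space_top N = quot_top (euclidean :: 'e topology) (coset_of N)"

text \<open>Elements of all the iterated spaces are encoded in one datatype:
  level 0 elements are Base x, level j+1 elements are Tri a b t (for (a,b,t)).\<close>
datatype ('x,'k) itr = Base 'x | Tri "('x,'k) itr" "('x,'k) itr" 'k

primrec lvl_top :: "'x topology \<Rightarrow> nat \<Rightarrow> ('x,'k::topological_space) itr topology" where
  "lvl_top T 0 = quot_top T Base"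
| "lvl_top T (Suc j) =
     quot_top (prod_topology (lvl_top T j) (prod_topology (lvl_top T j) (euclidean :: 'k topology)))
              (\<lambda>(a,b,t). Tri a b t)"

fun itr_add :: "('x \<Rightarrow> 'x \<Rightarrow> 'x) \<Rightarrow> ('x,'k::plus) itr \<Rightarrow> ('x,'k) itr \<Rightarrow> ('x,'k) itr" where
  "itr_add ad (Base x) (Base y) = Base (ad x y)"
| "itr_add ad (Tri a b t) (Tri a' b' s) = Tri (itr_add ad a a') (itr_add ad b b') (t + s)"
| "itr_add ad _ _ = undefined"

primrec itr_scl :: "('k \<Rightarrow> 'x \<Rightarrow> 'x) \<Rightarrow> 'k::times \<Rightarrow> ('x,'k) itr \<Rightarrow> ('x,'k) itr" where
  "itr_scl sc s (Base x) = Base (sc s x)"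
| "itr_scl sc s (Tri a b t) = Tri (itr_scl sc s a) (itr_scl sc s b) (s * t)"

definition dq_dom :: "'x topology \<Rightarrow> ('x \<Rightarrow> 'x \<Rightarrow> 'x) \<Rightarrow> ('k::{times,plus,topological_space} \<Rightarrow> 'x \<Rightarrow> 'x)
    \<Rightarrow> nat \<Rightarrow> ('x,'k) itr set \<Rightarrow> ('x,'k) itr set" where
  "dq_dom T ad sc j W = {Tri a b t | a b t. a \<in> W \<and> b \<in> topspace (lvl_top T j) \<and>
                                           itr_add ad a (itr_scl sc t b) \<in> W}"

primrec iter_dom :: "'x topology \<Rightarrow> ('x \<Rightarrow> 'x \<Rightarrow> 'x) \<Rightarrow> ('k::{times,plus,topological_space} \<Rightarrow> 'x \<Rightarrow> 'x)
    \<Rightarrow> 'x set \<Rightarrow> nat \<Rightarrow> ('x,'k) itr set" where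
  "iter_dom T ad sc V 0 = Base ` V"
| "iter_dom T ad sc V (Suc j) = dq_dom T ad sc j (iter_dom T ad sc V j)"

text \<open>The domain space X is given by its topology T (carrier topspace T), addition ad and scalar
  multiplication sc; the target Y is a type with scalar multiplication scY.\<close>
definition Ck_nat :: "'x topology \<Rightarrow> ('x \<Rightarrow> 'x \<Rightarrow> 'x) \<Rightarrow> ('k::{field,topological_space} \<Rightarrow> 'x \<Rightarrow> 'x)
    \<Rightarrow> ('k \<Rightarrow> 'y::{ab_group_add,topological_space} \<Rightarrow> 'y) \<Rightarrow> 'x set \<Rightarrow> ('x \<Rightarrow> 'y) \<Rightarrow> nat \<Rightarrow> bool" where
  "Ck_nat T ad sc scY V g k \<longleftrightarrow>
    (\<exists>h :: nat \<Rightarrow> ('x,'k) itr \<Rightarrow> 'y.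
       (\<forall>x\<in>V. h 0 (Base x) = g x) \<and>
       (\<forall>j\<le>k. continuous_map (subtopology (lvl_top T j) (iter_dom T ad sc V j)) euclidean (h j)) \<and>
       (\<forall>j<k. \<forall>a b t. Tri a b t \<in> iter_dom T ad sc V (Suc j) \<longrightarrow>
           h j (itr_add ad a (itr_scl sc t b)) - h j a = scY t (h (Suc j) (Tri a b t))))"

definition Ck :: "'x topology \<Rightarrow> ('x \<Rightarrow> 'x \<Rightarrow> 'x) \<Rightarrow> ('k::{field,topological_space} \<Rightarrow> 'x \<Rightarrow> 'x)
    \<Rightarrow> ('k \<Rightarrow> 'y::{ab_group_add,topological_space} \<Rightarrow> 'y) \<Rightarrow> 'x set \<Rightarrow> ('x \<Rightarrow> 'y) \<Rightarrow> enat \<Rightarrow> bool" where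
  "Ck T ad sc scY V g k \<longleftrightarrow> (\<forall>n. enat n \<le> k \<longrightarrow> Ck_nat T ad sc scY V g n)"

end

theory Submission
  imports Defs
begin

text \<open>The quotient map q and its lifts Q to the iterated spaces (q on every point entry, the
  identity on the scalar entries) are linear, continuous, open and surjective, and Q maps U^[j]
  onto U1^[j]. Composing the maps f1^[j] with Q therefore yields maps f^[j] for f = f1 o q.
  Conversely, each f^[j] is constant on the fibres of Q, by induction on j: at points (x, v, t)
  with t \<noteq> 0 the identity t f^[j+1](x, v, t) = f^[j](x + t v) - f^[j](x) determines f^[j+1],
  and at t = 0 continuity in t does, because 0 is not isolated in K and F is Hausdorff. Hence
  every f^[j] factors through Q, and the factors are continuous because Q is open.\<close>

section \<open>Quotient topologies and open maps\<close>

lemma openin_quot_top: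
  "openin (quot_top T q) U \<longleftrightarrow> U \<subseteq> q ` topspace T \<and> openin T (topspace T \<inter> q -` U)"
proof -
  let ?open = "\<lambda>U. U \<subseteq> q ` topspace T \<and> openin T (topspace T \<inter> q -` U)"
  have "?open (S \<inter> S')" if "?open S" "?open S'" for S S'
  proof -
    have "topspace T \<inter> q -` (S \<inter> S') = (topspace T \<inter> q -` S) \<inter> (topspace T \<inter> q -` S')"
      by auto
    then show ?thesis
      using that by (metis openin_Int le_infI1)
  qed
  moreover have "?open (\<Union>\<K>)" if "\<forall>S\<in>\<K>. ?open S" for \<K>
  proof -
    have "topspace T \<inter> q -` \<Union>\<K> = (\<Union>S\<in>\<K>. topspace T \<inter> q -` S)"
      by auto
    then show ?thesis
      using that by (metis (no_types, lifting) Sup_least imageE openin_Union)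
  qed
  ultimately have "istopology ?open"
    unfolding istopology_def by blast
  then show ?thesis
    unfolding quot_top_def by (simp add: topology_inverse')
qed

lemma topspace_quot_top [simp]: "topspace (quot_top T q) = q ` topspace T"
proof -
  have "topspace T \<inter> q -` q ` topspace T = topspace T"
    by auto
  then have "openin (quot_top T q) (q ` topspace T)"
    by (simp add: openin_quot_top)
  then show ?thesis
    by (metis openin_quot_top openin_subset openin_topspace subset_antisym)
qed

lemma quotient_map_quot_top: "quotient_map T (quot_top T q) q"
  unfolding quotient_map_def openin_quot_top topspace_quot_top
  by (auto simp: Int_def vimage_def Collect_conj_eq[symmetric] intro!: arg_cong[where f="openin T"])

lemma homeomorphic_map_quot_top: "inj q \<Longrightarrow> homeomorphic_map T (quot_top T q) q"
  by (simp add: homeomorphic_map_def quotient_map_quot_top inj_def inj_on_def)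

lemma open_map_map_prod:
  assumes "open_map X X' f" "open_map Y Y' g"
  shows "open_map (prod_topology X Y) (prod_topology X' Y') (map_prod f g)"
  unfolding open_map_def openin_prod_topology_alt[of X' Y']
proof (intro allI impI)
  fix S u v
  assume S: "openin (prod_topology X Y) S" and "(u, v) \<in> map_prod f g ` S"
  then obtain x y where xy: "(x, y) \<in> S" "u = f x" "v = g y"
    by auto
  then obtain U V where UV: "openin X U" "openin Y V" "x \<in> U" "y \<in> V" "U \<times> V \<subseteq> S"
    using S by (metis openin_prod_topology_alt)
  have "f ` U \<times> g ` V \<subseteq> map_prod f g ` S"
    using UV(5) by (auto simp: map_prod_surj_on)
  moreover have "openin X' (f ` U)" "openin Y' (g ` V)"
    using UV assms by (simp_all add: open_map_def)
  ultimately show "\<exists>U V. openin X' U \<and> openin Y' V \<and> u \<in> U \<and> v \<in> V \<and> U \<times> V \<subseteq> map_prod f g ` S"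
    using UV xy by blast
qed

lemma open_quotient_map_map_prod:
  assumes "quotient_map X X' f" "open_map X X' f" "quotient_map Y Y' g" "open_map Y Y' g"
  shows "quotient_map (prod_topology X Y) (prod_topology X' Y') (map_prod f g)"
    and "open_map (prod_topology X Y) (prod_topology X' Y') (map_prod f g)"
proof -
  show om: "open_map (prod_topology X Y) (prod_topology X' Y') (map_prod f g)"
    using assms by (simp add: open_map_map_prod)
  have "continuous_map (prod_topology X Y) (prod_topology X' Y') (map_prod f g)"
    using assms by (simp add: map_prod_def continuous_map_prod_top quotient_imp_continuous_map)
  moreover have "map_prod f g ` topspace (prod_topology X Y) = topspace (prod_topology X' Y')"
    using assms by (simp add: map_prod_surj_on quotient_imp_surjective_map)
  ultimately show "quotient_map (prod_topology X Y) (prod_topology X' Y') (map_prod f g)"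
    using om continuous_open_imp_quotient_map by blast
qed

lemma homeomorphic_map_map_prod:
  assumes "homeomorphic_map X X' f" "homeomorphic_map Y Y' g"
  shows "homeomorphic_map (prod_topology X Y) (prod_topology X' Y') (map_prod f g)"
  using assms open_quotient_map_map_prod(1)[of X X' f Y Y' g]
  by (simp add: homeomorphic_map_def homeomorphic_imp_open_map map_prod_inj_on)

lemma open_quotient_map_conjugate:
  assumes g: "homeomorphic_map X X' g" and h: "homeomorphic_map Y Y' h"
    and f: "quotient_map X Y f" "open_map X Y f"
    and F: "\<And>x. x \<in> topspace X \<Longrightarrow> F (g x) = h (f x)"
  shows "quotient_map X' Y' F \<and> open_map X' Y' F"
proof -
  obtain g' where g': "homeomorphic_maps X X' g g'"
    using g homeomorphic_map_maps by blast
  then have g'X: "homeomorphic_map X' X g'"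
    using homeomorphic_map_maps homeomorphic_maps_sym by blast
  have eq: "(h \<circ> f \<circ> g') x = F x" if "x \<in> topspace X'" for x
  proof -
    have "g' x \<in> topspace X" "g (g' x) = x"
      using g' that by (auto simp: homeomorphic_maps_def continuous_map_def)
    then show ?thesis
      using F[of "g' x"] by simp
  qed
  have "quotient_map X' Y' (h \<circ> f \<circ> g')" "open_map X' Y' (h \<circ> f \<circ> g')"
    using g'X f h
    by (auto intro!: quotient_map_compose open_map_compose
             simp: homeomorphic_map_def homeomorphic_imp_open_map)
  then show ?thesis
    using eq quotient_map_eq[of X' Y' "h \<circ> f \<circ> g'" F] open_map_eq[of X' Y' "h \<circ> f \<circ> g'" F]
    by simp
qed

lemma continuous_map_through_open_map:
  assumes P: "open_map X Y P" and D: "openin X D"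
    and h: "continuous_map (subtopology X D) Z h"
    and g: "\<And>x. x \<in> D \<Longrightarrow> g (P x) = h x"
  shows "continuous_map (subtopology Y (P ` D)) Z g"
  unfolding continuous_map_def
proof (intro conjI allI impI)
  have D_sub: "D \<subseteq> topspace X"
    using D openin_subset by blast
  have PD: "openin Y (P ` D)"
    using P D open_map_def by blast
  show "g \<in> topspace (subtopology Y (P ` D)) \<rightarrow> topspace Z"
    using h g D_sub continuous_map_image_subset_topspace by fastforce
  fix W assume "openin Z W"
  then have "openin (subtopology X D) {x \<in> topspace (subtopology X D). h x \<in> W}"
    using h openin_continuous_map_preimage by blast
  moreover have "{x \<in> topspace (subtopology X D). h x \<in> W} = {x \<in> D. h x \<in> W}"
    using D_sub by auto
  ultimately have "openin X {x \<in> D. h x \<in> W}"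
    using openin_open_subtopology[OF D] by simp
  then have "openin Y (P ` {x \<in> D. h x \<in> W})"
    using P by (simp add: open_map_def)
  moreover have "{y \<in> topspace (subtopology Y (P ` D)). g y \<in> W} = P ` {x \<in> D. h x \<in> W}"
    using g openin_subset[OF PD] by auto
  ultimately show "openin (subtopology Y (P ` D)) {y \<in> topspace (subtopology Y (P ` D)). g y \<in> W}"
    by (auto simp: openin_open_subtopology[OF PD])
qed

lemma continuous_map_case_prod_compose:
  assumes "continuous_map (prod_topology X Y) Z (case_prod g)"
    and "continuous_map W X f1" "continuous_map W Y f2"
  shows "continuous_map W Z (\<lambda>w. g (f1 w) (f2 w))"
  using continuous_map_compose[OF continuous_map_pairedI[OF assms(2,3)] assms(1)]
  by (simp add: o_def)

lemmas continuous_map_projections =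
  continuous_map_fst continuous_map_snd
  continuous_map_fst_of[unfolded o_def] continuous_map_snd_of[unfolded o_def]

lemma continuous_on_add_const:
  assumes "continuous_on UNIV (\<lambda>p::'a::{plus,topological_space} \<times> 'a. fst p + snd p)"
  shows "continuous_on UNIV (\<lambda>x::'a. x + c)"
proof -
  have "continuous_on UNIV (\<lambda>x::'a. fst (x, c) + snd (x, c))"
    by (rule continuous_on_compose2[OF assms]) (auto intro: continuous_intros)
  then show ?thesis
    by simp
qed

lemma at_zero_neq_bot:
  assumes "top_field TYPE('k::{field,topological_space})" and "non_discrete TYPE('k)"
  shows "at (0::'k) \<noteq> bot"
proof
  assume "at (0::'k) = bot"
  then have zero: "open {0::'k}"
    by (simp add: at_eq_bot_iff)
  have "open {c}" for c :: 'k
  proof -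
    have "continuous_on UNIV (\<lambda>x::'k. x + - c)"
      using assms(1) continuous_on_add_const unfolding top_field_def by blast
    then have "open ((\<lambda>x. x + - c) -` {0})"
      using open_vimage[OF zero] by simp
    moreover have "(\<lambda>x. x + - c) -` {0} = {c}"
      by auto
    ultimately show ?thesis
      by simp
  qed
  then have "open S" for S :: "'k set"
    using open_UN[of S "\<lambda>c. {c}"] by simp
  then show False
    using assms(2) by (simp add: non_discrete_def)
qed

lemma eq_at_limit_point_if_eq_nearby:
  fixes f g :: "'a::topological_space \<Rightarrow> 'b::t2_space"
  assumes "at a \<noteq> bot" "open S" "a \<in> S" "continuous_on S f" "continuous_on S g"
    and "\<And>x. x \<in> S \<Longrightarrow> x \<noteq> a \<Longrightarrow> f x = g x"
  shows "f a = g a"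
proof -
  have "(f \<longlongrightarrow> f a) (at a within S)" "(g \<longlongrightarrow> g a) (at a within S)"
    using assms(3-5) continuous_on_def by blast+
  then have "(f \<longlongrightarrow> f a) (at a)" "(g \<longlongrightarrow> g a) (at a)"
    using at_within_open[OF assms(3,2)] by simp_all
  moreover have "eventually (\<lambda>x. f x = g x) (at a)"
    using assms(2,3,6) eventually_at_topological by blast
  ultimately show ?thesis
    using assms(1) Lim_transform_eventually tendsto_unique by metis
qed

section \<open>The iterated spaces\<close>

text \<open>Since \<open>Base\<close> and \<open>Tri\<close> are injective, every level topology is a homeomorphic
  copy of \<open>T\<close>, resp. of \<open>L \<times> L \<times> K\<close> for the previous level \<open>L\<close>; all topological facts about the
  levels are transported along these homeomorphisms.\<close>

lemma homeomorphic_map_Base: "homeomorphic_map T (lvl_top T 0) Base"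
  by (simp add: homeomorphic_map_quot_top inj_def)

lemma homeomorphic_map_Tri:
  "homeomorphic_map (prod_topology (lvl_top T j) (prod_topology (lvl_top T j) euclidean))
     (lvl_top T (Suc j)) (\<lambda>(a, b, t). Tri a b t)"
  unfolding lvl_top.simps by (rule homeomorphic_map_quot_top) (auto simp: inj_def)

lemma Base_in_topspace_lvl_top: "Base x \<in> topspace (lvl_top T 0) \<longleftrightarrow> x \<in> topspace T"
  by auto

lemma Tri_in_topspace_lvl_top:
  "Tri a b t \<in> topspace (lvl_top T (Suc j)) \<longleftrightarrow>
     a \<in> topspace (lvl_top T j) \<and> b \<in> topspace (lvl_top T j)"
  by force

lemma topspace_lvl_top_SucE:
  assumes "x \<in> topspace (lvl_top T (Suc j))"
  obtains a b t where "x = Tri a b t" "a \<in> topspace (lvl_top T j)" "b \<in> topspace (lvl_top T j)"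
  using assms by force

lemma continuous_map_Tri:
  assumes "a \<in> topspace (lvl_top T j)" "b \<in> topspace (lvl_top T j)"
  shows "continuous_map euclidean (lvl_top T (Suc j)) (Tri a b)"
proof -
  have "continuous_map euclidean
          (prod_topology (lvl_top T j) (prod_topology (lvl_top T j) euclidean)) (\<lambda>s. (a, b, s))"
    using assms by (intro continuous_map_pairedI) auto
  from continuous_map_compose[OF this homeomorphic_imp_continuous_map[OF homeomorphic_map_Tri]]
  show ?thesis
    by (simp add: o_def)
qed

lemma continuous_map_itr_add:
  fixes ad :: "'x \<Rightarrow> 'x \<Rightarrow> 'x"
  assumes ad: "continuous_map (prod_topology T T) T (case_prod ad)"
    and plus: "continuous_map (prod_topology euclidean euclidean) euclidean
                 (\<lambda>(s, t). s + t :: 'k::{plus,topological_space})"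
  shows "continuous_map (prod_topology (lvl_top T j) (lvl_top T j)) (lvl_top T j)
           (case_prod (itr_add ad :: ('x, 'k) itr \<Rightarrow> _))"
proof (induction j)
  case 0
  have q: "quotient_map (prod_topology T T) (prod_topology (lvl_top T 0) (lvl_top T 0))
             (map_prod Base Base)"
    by (metis homeomorphic_map_def homeomorphic_map_map_prod homeomorphic_map_Base)
  have "continuous_map (prod_topology T T) (lvl_top T 0) (Base \<circ> case_prod ad)"
    using continuous_map_compose[OF ad homeomorphic_imp_continuous_map[OF homeomorphic_map_Base]] .
  moreover have "case_prod (itr_add ad) \<circ> map_prod Base Base = Base \<circ> case_prod ad"
    by auto
  ultimately show ?case
    by (metis continuous_compose_quotient_map[OF q])
next
  case (Suc j)
  let ?L = "lvl_top T j :: ('x, 'k) itr topology"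
  let ?Y = "prod_topology ?L (prod_topology ?L (euclidean :: 'k topology))"
  let ?tri = "\<lambda>(a, b, t). Tri a b t :: ('x, 'k) itr"
  let ?G = "\<lambda>(u, v). (itr_add ad (fst u) (fst v), itr_add ad (fst (snd u)) (fst (snd v)),
                      snd (snd u) + snd (snd v))"
  have q: "quotient_map (prod_topology ?Y ?Y)
             (prod_topology (lvl_top T (Suc j)) (lvl_top T (Suc j))) (map_prod ?tri ?tri)"
    by (metis homeomorphic_map_def homeomorphic_map_map_prod homeomorphic_map_Tri)
  have "continuous_map (prod_topology ?Y ?Y) ?Y ?G"
    unfolding case_prod_beta'
    by (intro continuous_map_pairedI continuous_map_case_prod_compose[OF Suc.IH]
          continuous_map_case_prod_compose[OF plus])
      (rule continuous_map_projections)+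
  moreover have "case_prod (itr_add ad) \<circ> map_prod ?tri ?tri = ?tri \<circ> ?G"
    by (auto simp: fun_eq_iff)
  ultimately have "continuous_map (prod_topology ?Y ?Y) (lvl_top T (Suc j))
                     (case_prod (itr_add ad) \<circ> map_prod ?tri ?tri)"
    using continuous_map_compose[OF _ homeomorphic_imp_continuous_map[OF homeomorphic_map_Tri]]
    by (simp only:)
  then show ?case
    by (rule continuous_compose_quotient_map[OF q])
qed

lemma continuous_map_itr_scl:
  fixes sc :: "'k::{times,topological_space} \<Rightarrow> 'x \<Rightarrow> 'x"
  assumes sc: "continuous_map (prod_topology euclidean T) T (case_prod sc)"
    and times: "continuous_map (prod_topology euclidean euclidean) euclidean (\<lambda>(s, t). s * t :: 'k)"
  shows "continuous_map (prod_topology euclidean (lvl_top T j)) (lvl_top T j)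
           (case_prod (itr_scl sc :: 'k \<Rightarrow> ('x, 'k) itr \<Rightarrow> _))"
proof (induction j)
  case 0
  have q: "quotient_map (prod_topology euclidean T) (prod_topology euclidean (lvl_top T 0))
             (map_prod id Base)"
    by (metis homeomorphic_map_def homeomorphic_map_map_prod homeomorphic_map_Base
        homeomorphic_map_id)
  have "continuous_map (prod_topology euclidean T) (lvl_top T 0) (Base \<circ> case_prod sc)"
    using continuous_map_compose[OF sc homeomorphic_imp_continuous_map[OF homeomorphic_map_Base]] .
  moreover have "case_prod (itr_scl sc) \<circ> map_prod id Base = Base \<circ> case_prod sc"
    by auto
  ultimately show ?case
    by (metis continuous_compose_quotient_map[OF q])
next
  case (Suc j)
  let ?L = "lvl_top T j :: ('x, 'k) itr topology"
  let ?Y = "prod_topology ?L (prod_topology ?L (euclidean :: 'k topology))"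
  let ?tri = "\<lambda>(a, b, t). Tri a b t :: ('x, 'k) itr"
  let ?G = "\<lambda>(s, u). (itr_scl sc s (fst u), itr_scl sc s (fst (snd u)), s * snd (snd u))"
  have q: "quotient_map (prod_topology euclidean ?Y) (prod_topology euclidean (lvl_top T (Suc j)))
             (map_prod id ?tri)"
    by (metis homeomorphic_map_def homeomorphic_map_map_prod homeomorphic_map_Tri
        homeomorphic_map_id)
  have "continuous_map (prod_topology euclidean ?Y) ?Y ?G"
    unfolding case_prod_beta'
    by (intro continuous_map_pairedI continuous_map_case_prod_compose[OF Suc.IH]
          continuous_map_case_prod_compose[OF times])
      (rule continuous_map_projections)+
  moreover have "case_prod (itr_scl sc) \<circ> map_prod id ?tri = ?tri \<circ> ?G"
    by (auto simp: fun_eq_iff)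
  ultimately have "continuous_map (prod_topology euclidean ?Y) (lvl_top T (Suc j))
                     (case_prod (itr_scl sc) \<circ> map_prod id ?tri)"
    using continuous_map_compose[OF _ homeomorphic_imp_continuous_map[OF homeomorphic_map_Tri]]
    by (simp only:)
  then show ?case
    by (rule continuous_compose_quotient_map[OF q])
qed

lemma Tri_in_iter_dom_Suc:
  "Tri a b t \<in> iter_dom T ad sc V (Suc j) \<longleftrightarrow>
     a \<in> iter_dom T ad sc V j \<and> b \<in> topspace (lvl_top T j) \<and>
     itr_add ad a (itr_scl sc t b) \<in> iter_dom T ad sc V j"
  by (auto simp: dq_dom_def)

lemma iter_dom_SucE:
  assumes "x \<in> iter_dom T ad sc V (Suc j)"
  obtains a b t where "x = Tri a b t"
  using assms by (auto simp: dq_dom_def)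

lemma iter_dom_subset_topspace:
  "V \<subseteq> topspace T \<Longrightarrow> iter_dom T ad sc V j \<subseteq> topspace (lvl_top T j)"
  by (induction j)
    (auto simp: dq_dom_def Base_in_topspace_lvl_top Tri_in_topspace_lvl_top simp del: lvl_top.simps)

lemma openin_iter_dom:
  fixes ad :: "'x \<Rightarrow> 'x \<Rightarrow> 'x" and sc :: "'k::{plus,times,topological_space} \<Rightarrow> 'x \<Rightarrow> 'x"
  assumes ad: "continuous_map (prod_topology T T) T (case_prod ad)"
    and sc: "continuous_map (prod_topology euclidean T) T (case_prod sc)"
    and plus: "continuous_map (prod_topology euclidean euclidean) euclidean (\<lambda>(s, t). s + t :: 'k)"
    and times: "continuous_map (prod_topology euclidean euclidean) euclidean (\<lambda>(s, t). s * t :: 'k)"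
    and V: "openin T V"
  shows "openin (lvl_top T j) (iter_dom T ad sc V j :: ('x, 'k) itr set)"
proof (induction j)
  case 0
  show ?case
    using V homeomorphic_map_Base homeomorphic_map_openness_eq openin_subset by fastforce
next
  case (Suc j)
  let ?L = "lvl_top T j :: ('x, 'k) itr topology"
  let ?Y = "prod_topology ?L (prod_topology ?L (euclidean :: 'k topology))"
  let ?D = "iter_dom T ad sc V j :: ('x, 'k) itr set"
  let ?W = "{p \<in> topspace ?Y. fst p \<in> ?D} \<inter>
            {p \<in> topspace ?Y. itr_add ad (fst p) (itr_scl sc (snd (snd p)) (fst (snd p))) \<in> ?D}"
  have "continuous_map ?Y ?L (\<lambda>p. itr_add ad (fst p) (itr_scl sc (snd (snd p)) (fst (snd p))))"
    by (intro continuous_map_case_prod_compose[OF continuous_map_itr_add[OF ad plus]]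
          continuous_map_case_prod_compose[OF continuous_map_itr_scl[OF sc times]])
      (rule continuous_map_projections)+
  then have W: "openin ?Y ?W"
    by (intro openin_Int openin_continuous_map_preimage[OF _ Suc.IH] continuous_map_fst)
  have eq: "iter_dom T ad sc V (Suc j) = (\<lambda>(a, b, t). Tri a b t) ` ?W"
  proof (intro set_eqI iffI)
    fix x assume x: "x \<in> iter_dom T ad sc V (Suc j)"
    then obtain a b t where "x = Tri a b t"
      by (rule iter_dom_SucE)
    moreover have "?D \<subseteq> topspace ?L"
      using iter_dom_subset_topspace[OF openin_subset[OF V]] .
    ultimately show "x \<in> (\<lambda>(a, b, t). Tri a b t) ` ?W"
      using x by (auto simp: Tri_in_iter_dom_Suc simp del: iter_dom.simps
                       intro!: image_eqI[where x="(a, b, t)"])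
  qed (auto simp: Tri_in_iter_dom_Suc simp del: iter_dom.simps)
  show ?case
    using homeomorphic_imp_open_map[OF homeomorphic_map_Tri] W unfolding eq open_map_def by blast
qed

lemma itr_add_scale_eq_iff:
  fixes sc :: "'k::{field,topological_space} \<Rightarrow> 'x::ab_group_add \<Rightarrow> 'x"
  assumes "vector_space sc" and "t \<noteq> 0"
    and "a \<in> topspace (lvl_top T j)" "b \<in> topspace (lvl_top T j)" "c \<in> topspace (lvl_top T j)"
  shows "itr_add (+) a (itr_scl sc t b) = c \<longleftrightarrow>
         b = itr_scl sc (inverse t) (itr_add (+) c (itr_scl sc (-1) a))"
  using assms(3-)
proof (induction j arbitrary: a b c)
  case 0
  interpret vector_space sc by fact
  show ?case
    using 0 \<open>t \<noteq> 0\<close> by (auto simp: scale_right_distrib)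
next
  case (Suc j)
  then show ?case
    using \<open>t \<noteq> 0\<close>
    by (auto elim!: topspace_lvl_top_SucE simp: Tri_in_topspace_lvl_top field_simps
             simp del: lvl_top.simps)
qed

lemma itr_add_scale_zero:
  fixes sc :: "'k::{field,topological_space} \<Rightarrow> 'x::ab_group_add \<Rightarrow> 'x"
  assumes "vector_space sc" "a \<in> topspace (lvl_top T j)" "b \<in> topspace (lvl_top T j)"
  shows "itr_add (+) a (itr_scl sc 0 b) = a"
proof -
  interpret vector_space sc by fact
  show ?thesis
    using assms(2,3)
    by (induction j arbitrary: a b)
      (auto elim!: topspace_lvl_top_SucE simp: Tri_in_topspace_lvl_top simp del: lvl_top.simps(2))
qed

lemma open_quotient_map_itr:
  fixes p :: "'x \<Rightarrow> 'y"
  assumes "quotient_map T T' p" "open_map T T' p"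
  shows "quotient_map (lvl_top T j) (lvl_top T' j)
           (map_itr p id :: ('x, 'k::topological_space) itr \<Rightarrow> _)
       \<and> open_map (lvl_top T j) (lvl_top T' j) (map_itr p id :: ('x, 'k) itr \<Rightarrow> _)"
proof (induction j)
  case 0
  show ?case
    by (rule open_quotient_map_conjugate[OF homeomorphic_map_Base homeomorphic_map_Base assms]) simp
next
  case (Suc j)
  note P = Suc.IH[THEN conjunct1] Suc.IH[THEN conjunct2]
  have id: "quotient_map euclidean euclidean (id :: 'k \<Rightarrow> 'k)"
    "open_map euclidean euclidean (id :: 'k \<Rightarrow> 'k)"
    by (metis homeomorphic_map_def homeomorphic_map_id, simp add: open_map_id)
  note P_id = open_quotient_map_map_prod[OF P id]
  show ?case
    by (rule open_quotient_map_conjugate[OF homeomorphic_map_Tri homeomorphic_map_Tri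
          open_quotient_map_map_prod[OF P P_id]]) auto
qed

lemma map_itr_Tri: "map_itr p id (Tri a b t) = Tri (map_itr p id a) (map_itr p id b) t"
  unfolding itr.map id_apply ..

lemma map_itr_itr_add:
  assumes "\<And>x y. p (ad x y) = ad' (p x) (p y)"
    and "x \<in> topspace (lvl_top T j)" "y \<in> topspace (lvl_top T j)"
  shows "map_itr p id (itr_add ad x y) =
         itr_add ad' (map_itr p id x) (map_itr p id (y :: ('x, 'k::{plus,topological_space}) itr))"
  using assms(2,3)
proof (induction j arbitrary: x y)
  case 0
  then show ?case
    by (auto simp: assms(1))
next
  case (Suc j)
  then show ?case
    by (auto elim!: topspace_lvl_top_SucE simp: Tri_in_topspace_lvl_top simp del: lvl_top.simps)
qed

lemma map_itr_itr_scl: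
  assumes "\<And>s x. p (sc s x) = sc' s (p x)"
  shows "map_itr p id (itr_scl sc s x) = itr_scl sc' s (map_itr p id x)"
  by (induction x) (simp_all add: assms)

definition Ck_witness :: "'x topology \<Rightarrow> ('x \<Rightarrow> 'x \<Rightarrow> 'x) \<Rightarrow> ('k::{field,topological_space} \<Rightarrow> 'x \<Rightarrow> 'x)
    \<Rightarrow> ('k \<Rightarrow> 'y::{ab_group_add,topological_space} \<Rightarrow> 'y) \<Rightarrow> 'x set \<Rightarrow> ('x \<Rightarrow> 'y) \<Rightarrow> nat
    \<Rightarrow> (nat \<Rightarrow> ('x, 'k) itr \<Rightarrow> 'y) \<Rightarrow> bool" where
  "Ck_witness T ad sc scY V g k h \<longleftrightarrow>
     (\<forall>x\<in>V. h 0 (Base x) = g x) \<and>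
     (\<forall>j\<le>k. continuous_map (subtopology (lvl_top T j) (iter_dom T ad sc V j)) euclidean (h j)) \<and>
     (\<forall>j<k. \<forall>a b t. Tri a b t \<in> iter_dom T ad sc V (Suc j) \<longrightarrow>
         h j (itr_add ad a (itr_scl sc t b)) - h j a = scY t (h (Suc j) (Tri a b t)))"

lemma Ck_nat_iff_Ck_witness: "Ck_nat T ad sc scY V g k \<longleftrightarrow> (\<exists>h. Ck_witness T ad sc scY V g k h)"
  unfolding Ck_nat_def Ck_witness_def ..

lemma Ck_witnessD:
  assumes "Ck_witness T ad sc scY V g k h"
  shows Ck_witness_base: "x \<in> V \<Longrightarrow> h 0 (Base x) = g x"
    and Ck_witness_continuous:
      "j \<le> k \<Longrightarrow> continuous_map (subtopology (lvl_top T j) (iter_dom T ad sc V j)) euclidean (h j)"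
    and Ck_witness_difference_quotient:
      "j < k \<Longrightarrow> Tri a b t \<in> iter_dom T ad sc V (Suc j) \<Longrightarrow>
         h j (itr_add ad a (itr_scl sc t b)) - h j a = scY t (h (Suc j) (Tri a b t))"
  using assms unfolding Ck_witness_def by auto

section \<open>C^k maps along a linear open quotient map\<close>

text \<open>\<open>p\<close> plays the role of the quotient map \<open>E \<rightarrow> E/N\<close>, and \<open>T\<close>, \<open>ad\<close>, \<open>sc\<close> that of the
  quotient topology and operations; only their compatibility with \<open>p\<close> is assumed.\<close>

locale linear_open_quotient =
  fixes sE :: "'k::{field,topological_space} \<Rightarrow> 'e::{ab_group_add,topological_space} \<Rightarrow> 'e"
    and T :: "'y topology" and ad :: "'y \<Rightarrow> 'y \<Rightarrow> 'y" and sc :: "'k \<Rightarrow> 'y \<Rightarrow> 'y"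
    and p :: "'e \<Rightarrow> 'y"
  assumes top_field: "top_field TYPE('k)" and tvs: "tvs sE"
    and p_add: "\<And>x y. p (x + y) = ad (p x) (p y)"
    and p_scale: "\<And>s x. p (sE s x) = sc s (p x)"
    and quotient_map_p: "quotient_map euclidean T p"
    and open_map_p: "open_map euclidean T p"
begin

abbreviation lift :: "('e, 'k) itr \<Rightarrow> ('y, 'k) itr" where
  "lift \<equiv> map_itr p id"

abbreviation lvl_E :: "nat \<Rightarrow> ('e, 'k) itr topology" where
  "lvl_E \<equiv> lvl_top euclidean"

abbreviation dom_E :: "'e set \<Rightarrow> nat \<Rightarrow> ('e, 'k) itr set" where
  "dom_E \<equiv> iter_dom euclidean (+) sE"

sublocale E: vector_space sE
  using tvs by (simp add: tvs_def)

lemma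
  shows continuous_map_plus:
      "continuous_map (prod_topology euclidean euclidean) euclidean (\<lambda>(s, t). s + t :: 'k)"
    and continuous_map_times:
      "continuous_map (prod_topology euclidean euclidean) euclidean (\<lambda>(s, t). s * t :: 'k)"
    and continuous_map_add:
      "continuous_map (prod_topology euclidean euclidean) euclidean (\<lambda>(x, y). x + y :: 'e)"
    and continuous_map_scale:
      "continuous_map (prod_topology euclidean euclidean) euclidean (case_prod sE)"
  using top_field tvs by (simp_all add: top_field_def tvs_def case_prod_unfold)

lemma itr_add_in_topspace:
  assumes "x \<in> topspace (lvl_E j)" "y \<in> topspace (lvl_E j)"
  shows "itr_add (+) x y \<in> topspace (lvl_E j)"
  using funcset_mem[OF continuous_map_funspace[OF continuous_map_itr_add[OF continuous_map_add
          continuous_map_plus, of j]], of "(x, y)"] assms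
  by simp

lemma itr_scl_in_topspace:
  assumes "x \<in> topspace (lvl_E j)"
  shows "itr_scl sE s x \<in> topspace (lvl_E j)"
  using funcset_mem[OF continuous_map_funspace[OF continuous_map_itr_scl[OF continuous_map_scale
          continuous_map_times, of j]], of "(s, x)"] assms
  by simp

lemma openin_dom_E: "open U \<Longrightarrow> openin (lvl_E j) (dom_E U j)"
  by (rule openin_iter_dom[OF continuous_map_add continuous_map_scale continuous_map_plus
        continuous_map_times]) simp

lemma dom_E_subset_topspace: "dom_E U j \<subseteq> topspace (lvl_E j)"
  by (rule iter_dom_subset_topspace) simp

lemma Tri_in_dom_E_SucD:
  assumes "Tri a b t \<in> dom_E U (Suc j)"
  shows "a \<in> dom_E U j" "itr_add (+) a (itr_scl sE t b) \<in> dom_E U j"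
    and "a \<in> topspace (lvl_E j)" "b \<in> topspace (lvl_E j)"
  using assms dom_E_subset_topspace by (auto simp: Tri_in_iter_dom_Suc simp del: iter_dom.simps)

lemma open_quotient_map_lift:
  shows quotient_map_lift: "quotient_map (lvl_E j) (lvl_top T j) lift"
    and open_map_lift: "open_map (lvl_E j) (lvl_top T j) lift"
  using open_quotient_map_itr[OF quotient_map_p open_map_p] by blast+

lemma lift_itr_scl: "lift (itr_scl sE s x) = itr_scl sc s (lift x)"
  by (rule map_itr_itr_scl[of p sE sc, OF p_scale])

lemma lift_itr_add:
  "x \<in> topspace (lvl_E j) \<Longrightarrow> y \<in> topspace (lvl_E j) \<Longrightarrow>
     lift (itr_add (+) x y) = itr_add ad (lift x) (lift y)"
  by (rule map_itr_itr_add[of p "(+)" ad, OF p_add])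

lemma lift_affine:
  assumes "a \<in> topspace (lvl_E j)" "b \<in> topspace (lvl_E j)"
  shows "lift (itr_add (+) a (itr_scl sE t b)) = itr_add ad (lift a) (itr_scl sc t (lift b))"
  using assms by (simp add: lift_itr_add lift_itr_scl itr_scl_in_topspace)

lemma lift_Tri_preimage:
  assumes a: "a \<in> dom_E U j" and c: "c \<in> dom_E U j" and b0: "b0 \<in> topspace (lvl_E j)"
    and c_eq: "lift c = itr_add ad (lift a) (itr_scl sc t (lift b0))"
  obtains b where "Tri a b t \<in> dom_E U (Suc j)" "lift b = lift b0"
proof (cases "t = 0")
  case True
  have "a \<in> topspace (lvl_E j)"
    using a dom_E_subset_topspace by blast
  then have "Tri a b0 t \<in> dom_E U (Suc j)"
    using True a b0 itr_add_scale_zero[OF E.vector_space_axioms _ b0]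
    by (simp add: Tri_in_iter_dom_Suc del: iter_dom.simps)
  then show ?thesis
    using that by blast
next
  case False
  have a_top: "a \<in> topspace (lvl_E j)" and c_top: "c \<in> topspace (lvl_E j)"
    using a c dom_E_subset_topspace by auto
  define b where "b = itr_scl sE (inverse t) (itr_add (+) c (itr_scl sE (-1) a))"
  have b_top: "b \<in> topspace (lvl_E j)"
    unfolding b_def by (intro itr_scl_in_topspace itr_add_in_topspace c_top a_top)
  have "itr_add (+) a (itr_scl sE t b) = c"
    using itr_add_scale_eq_iff[OF E.vector_space_axioms False a_top b_top c_top] b_def by simp
  then have "Tri a b t \<in> dom_E U (Suc j)"
    using a c b_top by (simp add: Tri_in_iter_dom_Suc del: iter_dom.simps)
  moreover have "lift b = lift b0"
  proof -
    let ?c' = "itr_add (+) a (itr_scl sE t b0)"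
    have c'_top: "?c' \<in> topspace (lvl_E j)"
      by (intro itr_add_in_topspace itr_scl_in_topspace a_top b0)
    have "lift c = lift ?c'"
      using c_eq lift_affine[OF a_top b0] by simp
    then have "lift b = lift (itr_scl sE (inverse t) (itr_add (+) ?c' (itr_scl sE (-1) a)))"
      unfolding b_def using a_top c_top c'_top
      by (simp add: lift_itr_scl lift_itr_add itr_scl_in_topspace)
    also have "\<dots> = lift b0"
      using itr_add_scale_eq_iff[OF E.vector_space_axioms False a_top b0 c'_top] by simp
    finally show ?thesis .
  qed
  ultimately show ?thesis
    using that by blast
qed

lemma lift_dom_E: "lift ` dom_E U j = iter_dom T ad sc (p ` U) j"
proof (induction j)
  case 0
  show ?case
    by (simp add: image_image)
next
  case (Suc j)
  let ?D = "iter_dom T ad sc (p ` U) j"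
  have surj: "lift ` topspace (lvl_E j) = topspace (lvl_top T j)"
    using quotient_map_lift quotient_imp_surjective_map by blast
  show ?case
  proof (intro set_eqI iffI)
    fix y assume "y \<in> lift ` dom_E U (Suc j)"
    then obtain x where x: "x \<in> dom_E U (Suc j)" and y: "y = lift x"
      by blast
    from x obtain a b t where abt: "x = Tri a b t"
      by (rule iter_dom_SucE)
    note ab = Tri_in_dom_E_SucD[OF x[unfolded abt]]
    have "itr_add ad (lift a) (itr_scl sc t (lift b)) \<in> ?D"
      unfolding Suc.IH[symmetric] lift_affine[OF ab(3,4), symmetric] using ab(2) by (rule imageI)
    moreover have "lift a \<in> ?D"
      unfolding Suc.IH[symmetric] using ab(1) by (rule imageI)
    moreover have "lift b \<in> topspace (lvl_top T j)"
      unfolding surj[symmetric] using ab(4) by (rule imageI)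
    ultimately show "y \<in> iter_dom T ad sc (p ` U) (Suc j)"
      unfolding y abt map_itr_Tri by (simp add: Tri_in_iter_dom_Suc del: iter_dom.simps)
  next
    fix y assume y_dom: "y \<in> iter_dom T ad sc (p ` U) (Suc j)"
    then obtain A B t where y: "y = Tri A B t"
      by (rule iter_dom_SucE)
    have AB: "A \<in> ?D" "B \<in> topspace (lvl_top T j)" "itr_add ad A (itr_scl sc t B) \<in> ?D"
      using y_dom unfolding y Tri_in_iter_dom_Suc by blast+
    obtain a where a: "a \<in> dom_E U j" "lift a = A"
      using AB(1) unfolding Suc.IH[symmetric] by (metis imageE)
    obtain b0 where b0: "b0 \<in> topspace (lvl_E j)" "lift b0 = B"
      using AB(2) unfolding surj[symmetric] by (metis imageE)
    obtain c where c: "c \<in> dom_E U j" "lift c = itr_add ad A (itr_scl sc t B)"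
      using AB(3) unfolding Suc.IH[symmetric] by (metis imageE)
    obtain b where "Tri a b t \<in> dom_E U (Suc j)" "lift b = B"
      using lift_Tri_preimage[OF a(1) c(1) b0(1)] a b0 c by metis
    moreover have "lift (Tri a b t) = y"
      unfolding y map_itr_Tri using a \<open>lift b = B\<close> by simp
    ultimately show "y \<in> lift ` dom_E U (Suc j)"
      by blast
  qed
qed

lemma lift_dom_E_SucE:
  assumes "Tri A B t \<in> iter_dom T ad sc (p ` U) (Suc j)"
  obtains a b where "Tri a b t \<in> dom_E U (Suc j)" "lift a = A" "lift b = B"
proof -
  obtain x where x: "x \<in> dom_E U (Suc j)" "lift x = Tri A B t"
    using assms unfolding lift_dom_E[symmetric] by (metis imageE)
  from x(1) obtain a b t' where x_eq: "x = Tri a b t'"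
    by (rule iter_dom_SucE)
  have "lift a = A" "lift b = B" "t' = t"
    using x(2) unfolding x_eq map_itr_Tri itr.inject by blast+
  then show ?thesis
    using that x(1) unfolding x_eq by blast
qed

lemma Ck_witness_compose:
  assumes h: "Ck_witness T ad sc scY (p ` U) f n h"
  shows "Ck_witness euclidean (+) sE scY U (\<lambda>x. f (p x)) n (\<lambda>j. h j \<circ> lift)"
  unfolding Ck_witness_def
proof (intro conjI allI impI ballI)
  fix x assume "x \<in> U"
  then show "(h 0 \<circ> lift) (Base x) = f (p x)"
    using Ck_witness_base[OF h] by simp
next
  fix j assume "j \<le> n"
  have "lift \<in> topspace (subtopology (lvl_E j) (dom_E U j)) \<rightarrow> iter_dom T ad sc (p ` U) j"
    unfolding lift_dom_E[symmetric] by auto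
  then have "continuous_map (subtopology (lvl_E j) (dom_E U j))
               (subtopology (lvl_top T j) (iter_dom T ad sc (p ` U) j)) lift"
    using quotient_imp_continuous_map[OF quotient_map_lift]
    by (intro continuous_map_into_subtopology continuous_map_from_subtopology)
  then show "continuous_map (subtopology (lvl_E j) (dom_E U j)) euclidean (h j \<circ> lift)"
    using Ck_witness_continuous[OF h \<open>j \<le> n\<close>] by (rule continuous_map_compose)
next
  fix j a b t assume "j < n" and abt: "Tri a b t \<in> dom_E U (Suc j)"
  have "lift (Tri a b t) \<in> iter_dom T ad sc (p ` U) (Suc j)"
    unfolding lift_dom_E[symmetric] using abt by (rule imageI)
  then have "h j (itr_add ad (lift a) (itr_scl sc t (lift b))) - h j (lift a) =
             scY t (h (Suc j) (Tri (lift a) (lift b) t))"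
    unfolding map_itr_Tri by (rule Ck_witness_difference_quotient[OF h \<open>j < n\<close>])
  then show "(h j \<circ> lift) (itr_add (+) a (itr_scl sE t b)) - (h j \<circ> lift) a =
             scY t ((h (Suc j) \<circ> lift) (Tri a b t))"
    by (simp add: lift_affine[OF Tri_in_dom_E_SucD(3,4)[OF abt]] map_itr_Tri)
qed

lemma Tri_slice:
  assumes U: "open U"
    and g: "continuous_map (subtopology (lvl_E (Suc j)) (dom_E U (Suc j))) euclidean g"
    and ab: "a \<in> topspace (lvl_E j)" "b \<in> topspace (lvl_E j)"
  shows open_Tri_slice: "open {s. Tri a b s \<in> dom_E U (Suc j)}"
    and continuous_on_Tri_slice:
      "continuous_on {s. Tri a b s \<in> dom_E U (Suc j)} (\<lambda>s. g (Tri a b s))"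
proof -
  note Tri_cont = continuous_map_Tri[OF ab]
  show "open {s. Tri a b s \<in> dom_E U (Suc j)}"
    using openin_continuous_map_preimage[OF Tri_cont openin_dom_E[OF U]] by simp
  have "continuous_map (top_of_set {s. Tri a b s \<in> dom_E U (Suc j)})
          (subtopology (lvl_E (Suc j)) (dom_E U (Suc j))) (Tri a b)"
    by (intro continuous_map_into_subtopology continuous_map_from_subtopology Tri_cont) auto
  from continuous_map_compose[OF this g]
  show "continuous_on {s. Tri a b s \<in> dom_E U (Suc j)} (\<lambda>s. g (Tri a b s))"
    by (simp add: o_def)
qed

lemma Ck_witness_lift_invariant_nonzero:
  assumes F: "vector_space sF" and h: "Ck_witness euclidean (+) sE sF U g n h" and "j < n"
    and IH: "\<And>a a'. a \<in> dom_E U j \<Longrightarrow> a' \<in> dom_E U j \<Longrightarrow> lift a = lift a' \<Longrightarrow> h j a = h j a'"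
    and "s \<noteq> 0" and abs: "Tri a b s \<in> dom_E U (Suc j)" and abs': "Tri a' b' s \<in> dom_E U (Suc j)"
    and "lift a = lift a'" "lift b = lift b'"
  shows "h (Suc j) (Tri a b s) = h (Suc j) (Tri a' b' s)"
proof -
  note d = Tri_in_dom_E_SucD[OF abs] and d' = Tri_in_dom_E_SucD[OF abs']
  have "lift (itr_add (+) a (itr_scl sE s b)) = lift (itr_add (+) a' (itr_scl sE s b'))"
    using \<open>lift a = lift a'\<close> \<open>lift b = lift b'\<close> lift_affine[OF d(3,4)] lift_affine[OF d'(3,4)]
    by simp
  then have "h j (itr_add (+) a (itr_scl sE s b)) - h j a =
             h j (itr_add (+) a' (itr_scl sE s b')) - h j a'"
    using IH[OF d(2) d'(2)] IH[OF d(1) d'(1) \<open>lift a = lift a'\<close>] by simp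
  then have "sF s (h (Suc j) (Tri a b s)) = sF s (h (Suc j) (Tri a' b' s))"
    unfolding Ck_witness_difference_quotient[OF h \<open>j < n\<close> abs]
      Ck_witness_difference_quotient[OF h \<open>j < n\<close> abs'] .
  then show ?thesis
    using \<open>s \<noteq> 0\<close> vector_space.scale_cancel_left[OF F] by blast
qed

lemma Ck_witness_lift_invariant:
  fixes sF :: "'k \<Rightarrow> 'f::{ab_group_add,t2_space} \<Rightarrow> 'f"
  assumes at0: "at (0::'k) \<noteq> bot" and F: "vector_space sF" and U: "open U"
    and h: "Ck_witness euclidean (+) sE sF U (\<lambda>x. f (p x)) n h"
  shows "j \<le> n \<Longrightarrow> a \<in> dom_E U j \<Longrightarrow> a' \<in> dom_E U j \<Longrightarrow> lift a = lift a' \<Longrightarrow> h j a = h j a'"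
proof (induction j arbitrary: a a')
  case 0
  then obtain x x' where "x \<in> U" "x' \<in> U" "a = Base x" "a' = Base x'" "p x = p x'"
    by auto
  then show ?case
    using Ck_witness_base[OF h] by simp
next
  case (Suc j)
  let ?D = "dom_E U (Suc j)"
  have IH: "\<And>a a'. a \<in> dom_E U j \<Longrightarrow> a' \<in> dom_E U j \<Longrightarrow> lift a = lift a' \<Longrightarrow> h j a = h j a'"
    using Suc.IH[OF Suc_leD[OF Suc.prems(1)]] .
  have off_zero: "h (Suc j) (Tri a b s) = h (Suc j) (Tri a' b' s)"
    if "s \<noteq> 0" "Tri a b s \<in> ?D" "Tri a' b' s \<in> ?D" "lift a = lift a'" "lift b = lift b'"
    for a b a' b' s
    by (rule Ck_witness_lift_invariant_nonzero[OF F h Suc_le_lessD[OF Suc.prems(1)] _ that])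
      (fact IH)
  note h_cont = Ck_witness_continuous[OF h Suc.prems(1)]
  obtain a1 b1 t where a: "a = Tri a1 b1 t"
    using Suc.prems(2) by (rule iter_dom_SucE)
  obtain a1' b1' t' where a': "a' = Tri a1' b1' t'"
    using Suc.prems(3) by (rule iter_dom_SucE)
  have lifts: "lift a1 = lift a1'" "lift b1 = lift b1'" "t' = t"
    using Suc.prems(4) unfolding a a' map_itr_Tri itr.inject by blast+
  have a_dom: "Tri a1 b1 t \<in> ?D" and a'_dom: "Tri a1' b1' t \<in> ?D"
    using Suc.prems(2,3) unfolding a a' lifts(3) .
  show ?case
  proof (cases "t = 0")
    case False
    show ?thesis
      unfolding a a' lifts(3) by (rule off_zero[OF False a_dom a'_dom lifts(1,2)])
  next
    case True
    let ?S = "{s. Tri a1 b1 s \<in> ?D} \<inter> {s. Tri a1' b1' s \<in> ?D}"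
    note ab = Tri_in_dom_E_SucD(3,4)[OF a_dom] and ab' = Tri_in_dom_E_SucD(3,4)[OF a'_dom]
    have "h (Suc j) (Tri a1 b1 0) = h (Suc j) (Tri a1' b1' 0)"
    proof (rule eq_at_limit_point_if_eq_nearby[OF at0])
      show "open ?S"
        using open_Tri_slice[OF U h_cont ab] open_Tri_slice[OF U h_cont ab'] by (rule open_Int)
      show "0 \<in> ?S"
        using a_dom a'_dom True by simp
      show "continuous_on ?S (\<lambda>s. h (Suc j) (Tri a1 b1 s))"
        by (rule continuous_on_subset[OF continuous_on_Tri_slice[OF U h_cont ab]]) blast
      show "continuous_on ?S (\<lambda>s. h (Suc j) (Tri a1' b1' s))"
        by (rule continuous_on_subset[OF continuous_on_Tri_slice[OF U h_cont ab']]) blast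
      show "h (Suc j) (Tri a1 b1 s) = h (Suc j) (Tri a1' b1' s)" if "s \<in> ?S" "s \<noteq> 0" for s
        using that off_zero[OF that(2) _ _ lifts(1,2)] by blast
    qed
    then show ?thesis
      unfolding a a' lifts(3) True .
  qed
qed

definition descended :: "'e set \<Rightarrow> (nat \<Rightarrow> ('e, 'k) itr \<Rightarrow> 'f) \<Rightarrow> nat \<Rightarrow> ('y, 'k) itr \<Rightarrow> 'f" where
  "descended U h j A = h j (SOME a. a \<in> dom_E U j \<and> lift a = A)"

lemma descended_lift:
  fixes sF :: "'k \<Rightarrow> 'f::{ab_group_add,t2_space} \<Rightarrow> 'f"
  assumes "at (0::'k) \<noteq> bot" "vector_space sF" "open U"
    and h: "Ck_witness euclidean (+) sE sF U (\<lambda>x. f (p x)) n h"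
    and "j \<le> n" "a \<in> dom_E U j"
  shows "descended U h j (lift a) = h j a"
proof -
  define a' where "a' = (SOME a'. a' \<in> dom_E U j \<and> lift a' = lift a)"
  have "\<exists>a'. a' \<in> dom_E U j \<and> lift a' = lift a"
    using \<open>a \<in> dom_E U j\<close> by blast
  then have "a' \<in> dom_E U j" "lift a' = lift a"
    unfolding a'_def by (metis (mono_tags, lifting) someI_ex)+
  then have "h j a' = h j a"
    by (rule Ck_witness_lift_invariant[OF assms(1-4,5) _ assms(6)])
  then show ?thesis
    unfolding descended_def a'_def .
qed

lemma Ck_witness_descended:
  fixes sF :: "'k \<Rightarrow> 'f::{ab_group_add,t2_space} \<Rightarrow> 'f"
  assumes at0: "at (0::'k) \<noteq> bot" and F: "vector_space sF" and U: "open U"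
    and h: "Ck_witness euclidean (+) sE sF U (\<lambda>x. f (p x)) n h"
  shows "Ck_witness T ad sc sF (p ` U) f n (descended U h)"
  unfolding Ck_witness_def
proof (intro conjI allI impI ballI)
  note h_lift = descended_lift[OF at0 F U h]
  fix X assume "X \<in> p ` U"
  then obtain x where "x \<in> U" "X = p x"
    by blast
  then show "descended U h 0 (Base X) = f X"
    using h_lift[of 0 "Base x"] Ck_witness_base[OF h] by simp
next
  note h_lift = descended_lift[OF at0 F U h]
  fix j assume "j \<le> n"
  have "continuous_map (subtopology (lvl_top T j) (lift ` dom_E U j)) euclidean (descended U h j)"
    by (rule continuous_map_through_open_map[OF open_map_lift openin_dom_E[OF U]
          Ck_witness_continuous[OF h \<open>j \<le> n\<close>]]) (rule h_lift[OF \<open>j \<le> n\<close>])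
  then show "continuous_map (subtopology (lvl_top T j) (iter_dom T ad sc (p ` U) j)) euclidean
               (descended U h j)"
    unfolding lift_dom_E .
next
  note h_lift = descended_lift[OF at0 F U h]
  fix j A B t assume "j < n" and ABt: "Tri A B t \<in> iter_dom T ad sc (p ` U) (Suc j)"
  from ABt obtain a b where abt: "Tri a b t \<in> dom_E U (Suc j)" and AB: "lift a = A" "lift b = B"
    by (rule lift_dom_E_SucE)
  note ab = Tri_in_dom_E_SucD[OF abt]
  have "descended U h j (itr_add ad A (itr_scl sc t B)) - descended U h j A =
        h j (itr_add (+) a (itr_scl sE t b)) - h j a"
    using h_lift[OF _ ab(2)] h_lift[OF _ ab(1)] \<open>j < n\<close>
    unfolding AB[symmetric] lift_affine[OF ab(3,4), symmetric] by simp
  also have "\<dots> = sF t (h (Suc j) (Tri a b t))"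
    by (rule Ck_witness_difference_quotient[OF h \<open>j < n\<close> abt])
  also have "h (Suc j) (Tri a b t) = descended U h (Suc j) (Tri A B t)"
    using h_lift[OF _ abt] \<open>j < n\<close> unfolding AB[symmetric] map_itr_Tri by simp
  finally show "descended U h j (itr_add ad A (itr_scl sc t B)) - descended U h j A =
                sF t (descended U h (Suc j) (Tri A B t))" .
qed

lemma Ck_nat_compose_iff:
  fixes sF :: "'k \<Rightarrow> 'f::{ab_group_add,t2_space} \<Rightarrow> 'f"
  assumes "at (0::'k) \<noteq> bot" "vector_space sF" "open U"
  shows "Ck_nat T ad sc sF (p ` U) f n \<longleftrightarrow> Ck_nat euclidean (+) sE sF U (\<lambda>x. f (p x)) n"
proof
  assume "Ck_nat T ad sc sF (p ` U) f n"
  then obtain h where "Ck_witness T ad sc sF (p ` U) f n h"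
    unfolding Ck_nat_iff_Ck_witness ..
  then have "Ck_witness euclidean (+) sE sF U (\<lambda>x. f (p x)) n (\<lambda>j. h j \<circ> lift)"
    by (rule Ck_witness_compose)
  then show "Ck_nat euclidean (+) sE sF U (\<lambda>x. f (p x)) n"
    unfolding Ck_nat_iff_Ck_witness by blast
next
  assume "Ck_nat euclidean (+) sE sF U (\<lambda>x. f (p x)) n"
  then obtain h where "Ck_witness euclidean (+) sE sF U (\<lambda>x. f (p x)) n h"
    unfolding Ck_nat_iff_Ck_witness ..
  then have "Ck_witness T ad sc sF (p ` U) f n (descended U h)"
    by (rule Ck_witness_descended[OF assms])
  then show "Ck_nat T ad sc sF (p ` U) f n"
    unfolding Ck_nat_iff_Ck_witness by blast
qed

lemma Ck_compose_iff:
  fixes sF :: "'k \<Rightarrow> 'f::{ab_group_add,t2_space} \<Rightarrow> 'f"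
  assumes "at (0::'k) \<noteq> bot" "vector_space sF" "open U"
  shows "Ck T ad sc sF (p ` U) f k \<longleftrightarrow> Ck euclidean (+) sE sF U (\<lambda>x. f (p x)) k"
  unfolding Ck_def using Ck_nat_compose_iff[OF assms] by simp

end

section \<open>Quotients by vector subspaces\<close>

lemma (in vector_space) coset_of_eq_iff:
  assumes "subspace N"
  shows "coset_of N x = coset_of N y \<longleftrightarrow> x - y \<in> N"
proof
  assume eq: "coset_of N x = coset_of N y"
  have "y \<in> coset_of N y"
    unfolding coset_of_def using subspace_0[OF assms] by force
  then have "y \<in> coset_of N x"
    unfolding eq .
  then obtain n where "n \<in> N" "y = x + n"
    unfolding coset_of_def by blast
  then show "x - y \<in> N"
    using subspace_neg[OF assms] by simp
next
  assume xy: "x - y \<in> N"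
  have "x + n = y + ((x - y) + n)" "y + n = x + (n - (x - y))" for n
    by (simp_all add: algebra_simps)
  then show "coset_of N x = coset_of N y"
    unfolding coset_of_def using xy subspace_add[OF assms] subspace_diff[OF assms] by metis
qed

lemma (in vector_space) coset_of_some_elem:
  assumes "subspace N"
  shows "(SOME a. a \<in> coset_of N x) - x \<in> N"
proof -
  have "x \<in> coset_of N x"
    unfolding coset_of_def using subspace_0[OF assms] by force
  then have "(SOME a. a \<in> coset_of N x) \<in> coset_of N x"
    by (rule someI)
  then show ?thesis
    unfolding coset_of_def by auto
qed

lemma (in vector_space) quot_add_coset_of:
  assumes "subspace N"
  shows "quot_add N (coset_of N x) (coset_of N y) = coset_of N (x + y)"
proof -
  have "(SOME a. a \<in> coset_of N x) + (SOME b. b \<in> coset_of N y) - (x + y) =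
        ((SOME a. a \<in> coset_of N x) - x) + ((SOME b. b \<in> coset_of N y) - y)"
    by (simp add: algebra_simps)
  then show ?thesis
    unfolding quot_add_def coset_of_eq_iff[OF assms]
    using subspace_add[OF assms] coset_of_some_elem[OF assms] by metis
qed

lemma (in vector_space) quot_scl_coset_of:
  assumes "subspace N"
  shows "quot_scl scale N s (coset_of N x) = coset_of N (scale s x)"
  unfolding quot_scl_def coset_of_eq_iff[OF assms] scale_right_diff_distrib[symmetric]
  using subspace_scale[OF assms] coset_of_some_elem[OF assms] by blast

lemma quotient_map_coset_of: "quotient_map euclidean (quot_space_top N) (coset_of N)"
  unfolding quot_space_top_def by (rule quotient_map_quot_top)

lemma open_map_coset_of:
  fixes sE :: "'k::{field,topological_space} \<Rightarrow> 'e::{ab_group_add,topological_space} \<Rightarrow> 'e"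
  assumes "tvs sE" "module.subspace sE N"
  shows "open_map euclidean (quot_space_top N) (coset_of N)"
  unfolding open_map_def
proof (intro allI impI)
  interpret vector_space sE
    using assms(1) by (simp add: tvs_def)
  fix V :: "'e set" assume "openin euclidean V"
  moreover have "continuous_on UNIV (\<lambda>z::'e. z + - n)" for n
    using assms(1) continuous_on_add_const unfolding tvs_def by blast
  ultimately have "open ((\<lambda>z. z + - n) -` V)" for n
    using open_vimage by auto
  moreover have "coset_of N -` coset_of N ` V = (\<Union>n\<in>N. (\<lambda>z. z + - n) -` V)"
  proof (intro set_eqI iffI)
    fix z assume "z \<in> coset_of N -` coset_of N ` V"
    then obtain v where "v \<in> V" "z - v \<in> N"
      using coset_of_eq_iff[OF assms(2)] by auto
    then show "z \<in> (\<Union>n\<in>N. (\<lambda>z. z + - n) -` V)"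
      by (auto intro!: bexI[of _ "z - v"])
  next
    fix z assume "z \<in> (\<Union>n\<in>N. (\<lambda>z. z + - n) -` V)"
    then obtain n where "n \<in> N" "z + - n \<in> V"
      by auto
    moreover have "z - (z + - n) = n"
      by simp
    ultimately show "z \<in> coset_of N -` coset_of N ` V"
      using coset_of_eq_iff[OF assms(2)] by (metis image_eqI vimageI)
  qed
  ultimately show "openin (quot_space_top N) (coset_of N ` V)"
    unfolding quot_space_top_def openin_quot_top by auto
qed

theorem lemma10p4:
  fixes sE :: "'k::{field,t2_space} \<Rightarrow> 'e::{ab_group_add,t2_space} \<Rightarrow> 'e"
    and sF :: "'k \<Rightarrow> 'f::{ab_group_add,t2_space} \<Rightarrow> 'f"
    and N :: "'e set" and k :: enat
    and f1 :: "'e set \<Rightarrow> 'f" and U1 :: "'e set set" and U :: "'e set"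
  assumes "top_field TYPE('k)" and "non_discrete TYPE('k)"
    and "tvs sE" and "tvs sF"
    and "module.subspace sE N" and "closed N"
    and "openin (quot_space_top N) U1"
    and "open U" and "coset_of N ` U = U1"
  shows "Ck (quot_space_top N) (quot_add N) (quot_scl sE N) sF U1 f1 k \<longleftrightarrow>
         Ck (euclidean :: 'e topology) (+) sE sF U (\<lambda>x. f1 (coset_of N x)) k"
proof -
  have E: "vector_space sE" and F: "vector_space sF"
    using assms(3,4) by (simp_all add: tvs_def)
  interpret linear_open_quotient sE "quot_space_top N" "quot_add N" "quot_scl sE N" "coset_of N"
    using assms(1,3,5) quotient_map_coset_of open_map_coset_of
      vector_space.quot_add_coset_of[OF E] vector_space.quot_scl_coset_of[OF E]
    by unfold_locales auto
  show ?thesis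
    using Ck_compose_iff[OF at_zero_neq_bot[OF assms(1,2)] F assms(8)] unfolding assms(9) .
qed

end
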